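(* Let $m\ge2$ be an integer, $0<h\le1$, $E=(\alpha+i\mu)h^{2m/(m+1)}$ with $\alpha,\mu>0$ independent of $h$, $\varphi(x)=\int_0^x(E+m^{-1}y^{2m})^{1/2}dy$ (branch of the square root with positive imaginary part), $u(x)=(\varphi')^{-1/2}e^{i\varphi/h}$, $f=-h^2\big(\tfrac34(\varphi')^{-2}(\varphi'')^2-\tfrac12(\varphi')^{-1}\varphi'''\big)$, $\gamma=h^{1/(m+1)}$, and $\tilde u(x)=\chi(x/\gamma)u(x)$, where $\chi\in C_c^\infty(\mathbb{R})$ with $\chi\equiv1$ on $|s|\le1$ and $\operatorname{supp}\chi\subset[-2,2]$. Let \[ R=f\tilde u+[(hD)^2,\chi(x/\gamma)]u. \] Then \[ \|R\|_{L^2}=\mathcal O(h^{2m/(m+1)})\|\tilde u\|_{L^2}. \]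
   Context: $hD=-ih\,\frac{d}{dx}$, and $[\cdot,\cdot]$ is the commutator, with $\chi(x/\gamma)$ acting as a multiplication operator. The implicit constant is independent of $h$. *)

theory Defs
  imports "HOL-Analysis.Analysis"
begin

definition Dx :: "(real \<Rightarrow> complex) \<Rightarrow> real \<Rightarrow> complex" where
  "Dx g x = vector_derivative g (at x)"

definition hD :: "real \<Rightarrow> (real \<Rightarrow> complex) \<Rightarrow> real \<Rightarrow> complex" where
  "hD h g x = - \<i> * complex_of_real h * Dx g x"

definition smooth_real :: "(real \<Rightarrow> real) \<Rightarrow> bool" where
  "smooth_real c \<longleftrightarrow> (\<exists>ds :: nat \<Rightarrow> real \<Rightarrow> real. ds 0 = c \<and>
      (\<forall>k x. (ds k has_real_derivative ds (Suc k) x) (at x)))"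

definition cutoff :: "(real \<Rightarrow> real) \<Rightarrow> bool" where
  "cutoff c \<longleftrightarrow> smooth_real c \<and> (\<forall>s. \<bar>s\<bar> \<le> 1 \<longrightarrow> c s = 1)
      \<and> closure {s. c s \<noteq> 0} \<subseteq> {-2..2}"

definition Een :: "nat \<Rightarrow> real \<Rightarrow> real \<Rightarrow> real \<Rightarrow> complex" where
  "Een m \<alpha> \<mu> h = Complex \<alpha> \<mu> * complex_of_real (h powr (2 * real m / (real m + 1)))"

text \<open>Integrand (E + y^(2m)/m)^(1/2), branch with positive imaginary part
  (the principal square root csqrt, since the argument lies in the open upper half plane).\<close>
definition phi_int :: "nat \<Rightarrow> real \<Rightarrow> real \<Rightarrow> real \<Rightarrow> real \<Rightarrow> complex" where
  "phi_int m \<alpha> \<mu> h y = csqrt (Een m \<alpha> \<mu> h + complex_of_real (y ^ (2*m) / real m))"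

definition phi :: "nat \<Rightarrow> real \<Rightarrow> real \<Rightarrow> real \<Rightarrow> real \<Rightarrow> complex" where
  "phi m \<alpha> \<mu> h x = (if 0 \<le> x then integral {0..x} (phi_int m \<alpha> \<mu> h)
                      else - integral {x..0} (phi_int m \<alpha> \<mu> h))"

definition uu :: "nat \<Rightarrow> real \<Rightarrow> real \<Rightarrow> real \<Rightarrow> real \<Rightarrow> complex" where
  "uu m \<alpha> \<mu> h x = Dx (phi m \<alpha> \<mu> h) x powr (-1/2)
      * exp (\<i> * phi m \<alpha> \<mu> h x / complex_of_real h)"

definition ff :: "nat \<Rightarrow> real \<Rightarrow> real \<Rightarrow> real \<Rightarrow> real \<Rightarrow> complex" where
  "ff m \<alpha> \<mu> h x =
     (let p = phi m \<alpha> \<mu> h;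
          p1 = Dx p x; p2 = Dx (Dx p) x; p3 = Dx (Dx (Dx p)) x
      in - (complex_of_real (h^2) * (3/4 * inverse (p1^2) * p2^2 - 1/2 * inverse p1 * p3)))"

definition gam :: "nat \<Rightarrow> real \<Rightarrow> real" where
  "gam m h = h powr (1 / (real m + 1))"

definition ut :: "(real \<Rightarrow> real) \<Rightarrow> nat \<Rightarrow> real \<Rightarrow> real \<Rightarrow> real \<Rightarrow> real \<Rightarrow> complex" where
  "ut chi m \<alpha> \<mu> h x = complex_of_real (chi (x / gam m h)) * uu m \<alpha> \<mu> h x"

definition comm :: "(real \<Rightarrow> real) \<Rightarrow> nat \<Rightarrow> real \<Rightarrow> real \<Rightarrow> real \<Rightarrow> real \<Rightarrow> complex" where
  "comm chi m \<alpha> \<mu> h x =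
     hD h (hD h (ut chi m \<alpha> \<mu> h)) x
     - complex_of_real (chi (x / gam m h)) * hD h (hD h (uu m \<alpha> \<mu> h)) x"

definition RR :: "(real \<Rightarrow> real) \<Rightarrow> nat \<Rightarrow> real \<Rightarrow> real \<Rightarrow> real \<Rightarrow> real \<Rightarrow> complex" where
  "RR chi m \<alpha> \<mu> h x = ff m \<alpha> \<mu> h x * ut chi m \<alpha> \<mu> h x + comm chi m \<alpha> \<mu> h x"

definition L2norm :: "(real \<Rightarrow> complex) \<Rightarrow> real" where
  "L2norm g = sqrt (\<integral>x. (cmod (g x))^2 \<partial>lborel)"

end

theory Submission
  imports Defs
begin

text \<open>
  Everything lives at the scale gamma = h^(1/(m+1)) of the cutoff. Writing q = phi'^2 = E + x^(2m)/m,
  one has |q| >= Im E = mu gamma^(2m) everywhere and |q| <= K gamma^(2m) for |x| <= 2 gamma. Hence on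
  that interval |phi''/phi'| <~ 1/gamma, |phi'''/phi'| <~ 1/gamma^2, |phi'|/h <~ 1/gamma and
  |Im phi|/h <~ 1, so that |u|^2 is comparable to gamma^(-m). The Leibniz rule gives R = -h^2 u Q with
  Q = chi (3/4 (phi''/phi')^2 - 1/2 phi'''/phi') + chi''/gamma^2 + 2 (chi'/gamma) u'/u, the cutoff and
  its derivatives taken at x/gamma; hence |R| <~ h^2 gamma^(-2) |u| = gamma^(2m) |u| on |x| <= 2 gamma
  and R = 0 elsewhere. As utilde = u on |x| <= gamma, both ||R|| / gamma^(2m) and ||utilde|| are
  comparable to gamma^((1-m)/2). No constant depends on h.
\<close>

section \<open>Smooth cutoffs\<close>

lemma deriv_iterates_vanish_on_open:
  assumes deriv: "\<And>k x. (ds k has_real_derivative ds (Suc k) x) (at x)"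
    and "open S" and vanish: "\<And>x. x \<in> S \<Longrightarrow> ds 0 x = 0" and "x \<in> S"
  shows "ds k x = (0::real)"
  using \<open>x \<in> S\<close>
proof (induction k arbitrary: x)
  case 0
  then show ?case by (rule vanish)
next
  case (Suc k)
  have "((\<lambda>_. 0) has_real_derivative 0) (at x)" by simp
  then have "(ds k has_real_derivative 0) (at x)"
    by (rule has_field_derivative_transform_within_open[OF _ \<open>open S\<close> Suc.prems]) (simp add: Suc.IH)
  then show ?case using deriv DERIV_unique by blast
qed

lemma deriv_iterate_bounded:
  assumes deriv: "\<And>k x. (ds k has_real_derivative ds (Suc k) x) (at x)"
    and "compact K" and vanish: "\<And>x. x \<notin> K \<Longrightarrow> ds 0 x = 0"
  shows "\<exists>B. \<forall>x. \<bar>ds k x\<bar> \<le> (B::real)"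
proof -
  have "continuous_on K (ds k)"
    by (meson DERIV_isCont deriv continuous_at_imp_continuous_on)
  then have "bounded (ds k ` K)"
    using \<open>compact K\<close> by (simp add: compact_continuous_image compact_imp_bounded)
  then obtain B where B: "\<And>x. x \<in> K \<Longrightarrow> \<bar>ds k x\<bar> \<le> B"
    by (auto simp: bounded_iff)
  have "\<bar>ds k x\<bar> \<le> \<bar>B\<bar>" for x
  proof (cases "x \<in> K")
    case True
    then show ?thesis using B by force
  next
    case False
    have "open (- K)" using \<open>compact K\<close> by (simp add: compact_imp_closed open_Compl)
    have "ds k x = 0"
      by (rule deriv_iterates_vanish_on_open[where ds=ds and S="- K", OF deriv \<open>open (- K)\<close>])
        (use False vanish in auto)
    then show ?thesis by simp
  qed
  then show ?thesis by blast
qed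

lemma deriv_iterates_uniformly_bounded:
  assumes deriv: "\<And>k x. (ds k has_real_derivative ds (Suc k) x) (at x)"
    and "compact K" and "\<And>x. x \<notin> K \<Longrightarrow> ds 0 x = 0"
  shows "\<exists>B>0. \<forall>k\<le>n. \<forall>x. \<bar>ds k x\<bar> \<le> (B::real)"
proof (induction n)
  case 0
  obtain B where B: "\<forall>x. \<bar>ds 0 x\<bar> \<le> B" using deriv_iterate_bounded[OF assms] by blast
  have "\<bar>ds 0 x\<bar> \<le> \<bar>B\<bar> + 1" for x
    using B[rule_format, of x] abs_ge_self[of B] by linarith
  then show ?case by (intro exI[of _ "\<bar>B\<bar> + 1"]) auto
next
  case (Suc n)
  then obtain B where B: "B > 0" "\<forall>k\<le>n. \<forall>x. \<bar>ds k x\<bar> \<le> B" by blast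
  obtain B' where B': "\<forall>x. \<bar>ds (Suc n) x\<bar> \<le> B'" using deriv_iterate_bounded[OF assms] by blast
  have "\<bar>ds k x\<bar> \<le> B + \<bar>B'\<bar>" if "k \<le> Suc n" for k x
  proof (cases "k = Suc n")
    case True
    then show ?thesis using B'[rule_format, of x] abs_ge_self[of B'] \<open>B > 0\<close> by simp
  next
    case False
    then have "\<bar>ds k x\<bar> \<le> B" using B(2) that by simp
    then show ?thesis by linarith
  qed
  then show ?case using \<open>B > 0\<close> by (intro exI[of _ "B + \<bar>B'\<bar>"]) auto
qed

locale cutoff_derivs =
  fixes chi :: "real \<Rightarrow> real" and ds :: "nat \<Rightarrow> real \<Rightarrow> real" and B :: real
  assumes ds_0: "ds 0 = chi"
    and ds_deriv: "\<And>k x. (ds k has_real_derivative ds (Suc k) x) (at x)"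
    and ds_vanish: "\<And>k s. 2 < \<bar>s\<bar> \<Longrightarrow> ds k s = 0"
    and B_pos: "0 < B"
    and ds_bound: "\<And>k s. k \<le> 2 \<Longrightarrow> \<bar>ds k s\<bar> \<le> B"
    and chi_one: "\<And>s. \<bar>s\<bar> \<le> 1 \<Longrightarrow> chi s = 1"

lemma cutoff_imp_cutoff_derivs:
  assumes "cutoff chi" shows "\<exists>ds B. cutoff_derivs chi ds B"
proof -
  obtain ds where ds0: "ds 0 = chi" and deriv: "\<forall>k x. (ds k has_real_derivative ds (Suc k) x) (at x)"
    using assms unfolding cutoff_def smooth_real_def by blast
  have "{s. chi s \<noteq> 0} \<subseteq> {-2..2}"
    using assms order_trans[OF closure_subset] unfolding cutoff_def by blast
  then have vanish: "ds 0 s = 0" if "s \<notin> {-2..2}" for s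
    using that ds0 by blast
  have outside: "ds k s = 0" if "2 < \<bar>s\<bar>" for k s
    by (rule deriv_iterates_vanish_on_open[where ds=ds and S="- {-2..2}"])
      (use deriv that vanish in auto)
  obtain B where B: "B > 0" "\<forall>k\<le>2. \<forall>s. \<bar>ds k s\<bar> \<le> B"
    using deriv_iterates_uniformly_bounded[where ds=ds and K="{-2..2}" and n=2] deriv vanish
    by (metis compact_Icc)
  have "cutoff_derivs chi ds B"
    using ds0 deriv outside B assms by unfold_locales (auto simp: cutoff_def)
  then show ?thesis by blast
qed

section \<open>Differentiating complex functions of a real variable\<close>

lemma has_vector_derivative_inverse:
  fixes f :: "real \<Rightarrow> complex"
  assumes "(f has_vector_derivative f') (at x)" "f x \<noteq> 0"
  shows "((\<lambda>y. inverse (f y)) has_vector_derivative - f' / (f x)^2) (at x)"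
proof -
  have "((inverse \<circ> f) has_vector_derivative f' * (- (inverse (f x) ^ Suc (Suc 0)))) (at x)"
    by (rule field_vector_diff_chain_at[OF assms(1) DERIV_inverse[OF assms(2)]])
  then show ?thesis by (simp add: o_def field_simps power2_eq_square)
qed

lemma has_vector_derivative_of_real_rescaled:
  assumes "\<And>s. (c has_real_derivative c' s) (at s)" "g \<noteq> 0"
  shows "((\<lambda>x. complex_of_real (c (x / g) / g ^ k)) has_vector_derivative
           complex_of_real (c' (x / g) / g ^ Suc k)) (at x)"
proof -
  have "((\<lambda>x. c (x / g)) has_real_derivative c' (x / g) * (1 / g)) (at x)"
    by (rule DERIV_chain2[OF assms(1)]) (use assms(2) in \<open>auto intro!: derivative_eq_intros\<close>)
  then have "((\<lambda>x. c (x / g) / g ^ k) has_real_derivative c' (x / g) * (1 / g) / g ^ k) (at x)"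
    by (rule DERIV_cdivide)
  then have "((\<lambda>x. c (x / g) / g ^ k) has_real_derivative c' (x / g) / g ^ Suc k) (at x)"
    by (simp add: field_simps)
  then show ?thesis by (rule has_vector_derivative_of_real)
qed

lemma Dx_eqI: "(\<And>y. (F has_vector_derivative F' y) (at y)) \<Longrightarrow> Dx F = F'"
  by (rule ext) (simp add: Dx_def vector_derivative_at)

lemma hD_hD:
  assumes "\<And>y. (F has_vector_derivative F1 y) (at y)" "(F1 has_vector_derivative F2) (at x)"
  shows "hD h (hD h F) x = - complex_of_real (h^2) * F2"
proof -
  have "hD h F = (\<lambda>y. (- \<i> * complex_of_real h) * F1 y)"
    by (rule ext) (simp add: hD_def Dx_eqI[OF assms(1)])
  moreover have "((\<lambda>y. (- \<i> * complex_of_real h) * F1 y) has_vector_derivative (- \<i> * complex_of_real h) * F2) (at x)"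
    by (rule has_vector_derivative_mult_right[OF assms(2)])
  ultimately have "Dx (hD h F) x = (- \<i> * complex_of_real h) * F2"
    by (simp add: Dx_def vector_derivative_at)
  then show ?thesis by (simp add: hD_def power2_eq_square algebra_simps)
qed

lemma hD_hD_mult_commutator:
  fixes c F :: "real \<Rightarrow> complex"
  assumes c: "\<And>y. (c has_vector_derivative c1 y) (at y)" "(c1 has_vector_derivative c2) (at x)"
    and F: "\<And>y. (F has_vector_derivative F1 y) (at y)" "(F1 has_vector_derivative F2) (at x)"
  shows "hD h (hD h (\<lambda>y. c y * F y)) x - c x * hD h (hD h F) x
           = - complex_of_real (h^2) * (c2 * F x + 2 * c1 x * F1 x)"
proof -
  have "((\<lambda>y. c y * F y) has_vector_derivative c y * F1 y + c1 y * F y) (at y)" for y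
    by (rule has_vector_derivative_mult[OF c(1) F(1)])
  moreover have "((\<lambda>y. c y * F1 y + c1 y * F y) has_vector_derivative
      (c x * F2 + c1 x * F1 x) + (c1 x * F1 x + c2 * F x)) (at x)"
    by (intro has_vector_derivative_add has_vector_derivative_mult c F)
  ultimately have H: "hD h (hD h (\<lambda>y. c y * F y)) x
      = - complex_of_real (h^2) * ((c x * F2 + c1 x * F1 x) + (c1 x * F1 x + c2 * F x))"
    by (rule hD_hD)
  show ?thesis unfolding H hD_hD[OF F] by (simp add: algebra_simps)
qed

section \<open>The scale and two L2 estimates\<close>

lemma gam_pos: "0 < h \<Longrightarrow> 0 < gam m h"
  by (simp add: gam_def)

lemma gam_power: "0 < h \<Longrightarrow> gam m h ^ n = h powr (real n / (real m + 1))"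
  by (simp add: gam_def powr_powr powr_realpow[symmetric])

lemma gam_power_Suc:
  assumes "0 < h" shows "gam m h ^ Suc m = h"
proof -
  have "gam m h ^ Suc m = h powr (real (Suc m) / (real m + 1))"
    by (rule gam_power[OF assms])
  also have "real (Suc m) / (real m + 1) = 1" by simp
  finally show ?thesis using assms by simp
qed

lemma L2norm_le_of_pointwise_bound:
  assumes bound: "\<And>x. (cmod (F x))^2 \<le> indicator {a..b} x * c" and "a \<le> b" "0 \<le> c"
  shows "L2norm F \<le> sqrt ((b - a) * c)"
proof -
  have "(\<integral>x. (cmod (F x))^2 \<partial>lborel) \<le> (b - a) * c"
  proof (cases "integrable lborel (\<lambda>x. (cmod (F x))^2)")
    case True
    have "(\<integral>x. (cmod (F x))^2 \<partial>lborel) \<le> (\<integral>x. indicator {a..b} x * c \<partial>lborel)"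
      by (rule integral_mono[OF True]) (use \<open>a \<le> b\<close> bound in \<open>auto simp: integrable_indicator_iff\<close>)
    then show ?thesis using \<open>a \<le> b\<close> by simp
  next
    case False
    then show ?thesis using assms(2,3) by (simp add: not_integrable_integral_eq)
  qed
  then show ?thesis unfolding L2norm_def by simp
qed

lemma L2norm_ge_of_pointwise_bound:
  assumes "integrable lborel (\<lambda>x. (cmod (F x))^2)" and "a \<le> b"
    and bound: "\<And>x. x \<in> {a..b} \<Longrightarrow> c \<le> (cmod (F x))^2"
  shows "sqrt ((b - a) * c) \<le> L2norm F"
proof -
  have "(b - a) * c = (\<integral>x. indicator {a..b} x * c \<partial>lborel)"
    using \<open>a \<le> b\<close> by simp
  also have "\<dots> \<le> (\<integral>x. (cmod (F x))^2 \<partial>lborel)"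
  proof (rule integral_mono[OF _ assms(1)])
    show "integrable lborel (\<lambda>x. indicator {a..b} x * c)"
      using \<open>a \<le> b\<close> by (simp add: integrable_indicator_iff)
  qed (use bound in \<open>auto simp: indicator_def\<close>)
  finally show ?thesis unfolding L2norm_def by simp
qed

lemma square_integrable_of_pointwise_bound:
  fixes F :: "real \<Rightarrow> complex"
  assumes "continuous_on UNIV F" and bound: "\<And>x. (cmod (F x))^2 \<le> indicator {a..b} x * c"
    and "a \<le> b"
  shows "integrable lborel (\<lambda>x. (cmod (F x))^2)"
proof (rule Bochner_Integration.integrable_bound)
  show "integrable lborel (\<lambda>x. indicator {a..b} x * \<bar>c\<bar>)"
    using \<open>a \<le> b\<close> by (simp add: integrable_indicator_iff)
  have "continuous_on UNIV (\<lambda>x. (cmod (F x))^2)"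
    by (intro continuous_intros assms(1))
  then show "(\<lambda>x. (cmod (F x))^2) \<in> borel_measurable lborel"
    using borel_measurable_continuous_onI by simp
  show "AE x in lborel. norm ((cmod (F x))^2) \<le> norm (indicator {a..b} x * \<bar>c\<bar>)"
  proof (intro AE_I2)
    fix x
    show "norm ((cmod (F x))^2) \<le> norm (indicator {a..b} x * \<bar>c\<bar>)"
      using bound[of x] abs_ge_self[of c] by (auto simp: indicator_def)
  qed
qed

section \<open>The WKB phase and amplitude\<close>

locale wkb_params =
  fixes m :: nat and \<alpha> \<mu> :: real
  assumes m_pos: "0 < m" and \<mu>_pos: "0 < \<mu>"
begin

text \<open>On \<open>|x| \<le> 2\<gamma>\<close>: \<open>|q| \<le> Kq \<gamma>\<^sup>2\<^sup>m\<close>, \<open>\<gamma>\<^sup>2\<^sup>m\<^sup>-\<^sup>n |x|\<^sup>n / |q| \<le> Ka\<close> and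
  \<open>Ku0 \<le> \<gamma>\<^sup>m |u|\<^sup>2 \<le> Ku1\<close>; \<open>KQ B\<close> bounds \<open>\<gamma>\<^sup>2 |Q|\<close> when the cutoff derivatives are bounded by \<open>B\<close>.\<close>
definition Kq :: real where "Kq = cmod (Complex \<alpha> \<mu>) + 4^m / real m"
definition Ka :: real where "Ka = 4^m / \<mu>"
definition Ku0 :: real where "Ku0 = exp (- 4 * sqrt Kq) / sqrt Kq"
definition Ku1 :: real where "Ku1 = exp (4 * sqrt Kq) / sqrt \<mu>"
definition KQ :: "real \<Rightarrow> real" where
  "KQ B = B * (3/4 * Ka^2 + 1/2 * (2 * m * Ka + Ka^2) + 1 + Ka + 2 * sqrt Kq)"

lemma Kq_pos: "0 < Kq"
  using m_pos by (simp add: Kq_def add_nonneg_pos)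

lemma Ka_pos: "0 < Ka"
  using \<mu>_pos by (simp add: Ka_def)

lemma Ku0_pos: "0 < Ku0"
  using Kq_pos by (simp add: Ku0_def)

lemma Ku1_pos: "0 < Ku1"
  using \<mu>_pos by (simp add: Ku1_def)

lemma KQ_pos:
  assumes "0 < B" shows "0 < KQ B"
proof -
  have "0 \<le> 3/4 * Ka^2 + 1/2 * (2 * m * Ka + Ka^2)" "0 \<le> sqrt Kq"
    using Ka_pos Kq_pos by simp_all
  then show ?thesis unfolding KQ_def using assms Ka_pos by (intro mult_pos_pos) linarith+
qed

end

locale wkb = wkb_params +
  fixes h :: real
  assumes h_pos: "0 < h"
begin

abbreviation \<gamma> :: real where "\<gamma> \<equiv> gam m h"
abbreviation dphi :: "real \<Rightarrow> complex" where "dphi \<equiv> phi_int m \<alpha> \<mu> h"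

lemma \<gamma>_pos: "0 < \<gamma>"
  using h_pos by (rule gam_pos)

definition q :: "real \<Rightarrow> complex" where
  "q x = Een m \<alpha> \<mu> h + complex_of_real (x ^ (2*m) / real m)"

text \<open>\<open>a1\<close> and \<open>a2\<close> are \<open>\<phi>''/\<phi>'\<close> and \<open>\<phi>'''/\<phi>'\<close>.\<close>
definition a1 :: "real \<Rightarrow> complex" where
  "a1 x = complex_of_real (x ^ (2*m-1)) / q x"
definition a2 :: "real \<Rightarrow> complex" where
  "a2 x = complex_of_real (real (2*m-1) * x ^ (2*m-2)) / q x - (a1 x)^2"

lemma dphi_eq: "dphi x = csqrt (q x)"
  by (simp add: phi_int_def q_def)

lemma Im_q: "Im (q x) = \<mu> * \<gamma> ^ (2*m)"
  using h_pos by (simp add: q_def Een_def gam_power)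

lemma q_nonzero: "q x \<noteq> 0"
  using Im_q[of x] \<mu>_pos \<gamma>_pos by auto

lemma q_not_nonpos: "q x \<notin> \<real>\<^sub>\<le>\<^sub>0"
  using Im_q[of x] \<mu>_pos \<gamma>_pos by (auto simp: complex_nonpos_Reals_iff)

lemma dphi_squared: "(dphi x)^2 = q x"
  by (simp add: dphi_eq)

lemma Im_dphi_nonzero: "Im (dphi x) \<noteq> 0"
proof
  assume "Im (dphi x) = 0"
  then have "Im ((dphi x)^2) = 0" by (simp add: power2_eq_square)
  then show False using Im_q[of x] \<mu>_pos \<gamma>_pos by (simp add: dphi_squared)
qed

lemma dphi_nonzero: "dphi x \<noteq> 0"
  using Im_dphi_nonzero[of x] by auto

lemma dphi_not_nonpos: "dphi x \<notin> \<real>\<^sub>\<le>\<^sub>0"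
  using Im_dphi_nonzero[of x] by (auto simp: complex_nonpos_Reals_iff)

lemma q_has_derivative: "(q has_vector_derivative complex_of_real (2 * x ^ (2*m-1))) (at x)"
proof -
  have "((\<lambda>x. x ^ (2*m) / real m) has_real_derivative real (2*m) * x ^ (2*m-1) / real m) (at x)"
    by (auto intro!: derivative_eq_intros)
  also have "real (2*m) * x ^ (2*m-1) / real m = 2 * x ^ (2*m-1)"
    using m_pos by simp
  finally have "((\<lambda>x. complex_of_real (x ^ (2*m) / real m)) has_vector_derivative
      complex_of_real (2 * x ^ (2*m-1))) (at x)"
    by (rule has_vector_derivative_of_real)
  then show ?thesis unfolding q_def
    by (rule has_vector_derivative_eq_rhs[OF has_vector_derivative_add[OF has_vector_derivative_const]]) simp
qed

lemma a1_has_derivative: "(a1 has_vector_derivative a2 x - (a1 x)^2) (at x)"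
proof -
  have "((\<lambda>x. x ^ (2*m-1)) has_real_derivative real (2*m-1) * x ^ (2*m-1-1)) (at x)"
    using DERIV_pow[of "2*m-1" x] by simp
  moreover have "2*m-1-1 = 2*m-2" by simp
  ultimately have "((\<lambda>x. complex_of_real (x ^ (2*m-1))) has_vector_derivative
      complex_of_real (real (2*m-1) * x ^ (2*m-2))) (at x)"
    by (metis has_vector_derivative_of_real)
  from has_vector_derivative_mult[OF this has_vector_derivative_inverse[OF q_has_derivative q_nonzero]]
  have "((\<lambda>x. complex_of_real (x ^ (2*m-1)) * inverse (q x)) has_vector_derivative
      complex_of_real (x ^ (2*m-1)) * (- complex_of_real (2 * x ^ (2*m-1)) / (q x)^2)
      + complex_of_real (real (2*m-1) * x ^ (2*m-2)) * inverse (q x)) (at x)" .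
  moreover have "(\<lambda>x. complex_of_real (x ^ (2*m-1)) * inverse (q x)) = a1"
    by (rule ext) (simp add: a1_def divide_inverse)
  moreover have "complex_of_real (x ^ (2*m-1)) * (- complex_of_real (2 * x ^ (2*m-1)) / (q x)^2)
      + complex_of_real (real (2*m-1) * x ^ (2*m-2)) * inverse (q x) = a2 x - (a1 x)^2"
    using q_nonzero[of x] by (simp add: a1_def a2_def field_simps power2_eq_square)
  ultimately show ?thesis by simp
qed

lemma dphi_has_derivative: "(dphi has_vector_derivative dphi x * a1 x) (at x)"
proof -
  have "((csqrt \<circ> q) has_vector_derivative
      complex_of_real (2 * x ^ (2*m-1)) * inverse (2 * csqrt (q x))) (at x)"
    by (rule field_vector_diff_chain_at[OF q_has_derivative has_field_derivative_csqrt[OF q_not_nonpos]])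
  moreover have "csqrt \<circ> q = dphi"
    by (rule ext) (simp add: dphi_eq)
  moreover have "complex_of_real (2 * x ^ (2*m-1)) * inverse (2 * csqrt (q x))
      = complex_of_real (x ^ (2*m-1)) / dphi x"
    by (simp add: dphi_eq field_simps)
  moreover have "complex_of_real (x ^ (2*m-1)) / dphi x = dphi x * a1 x"
  proof -
    have "q x = dphi x * dphi x" using dphi_squared[of x] by (simp add: power2_eq_square)
    then show ?thesis unfolding a1_def using dphi_nonzero[of x] by (simp add: field_simps)
  qed
  ultimately show ?thesis by simp
qed

lemma phi''_has_derivative: "((\<lambda>x. dphi x * a1 x) has_vector_derivative dphi x * a2 x) (at x)"
proof -
  have "((\<lambda>x. dphi x * a1 x) has_vector_derivative
      dphi x * (a2 x - (a1 x)^2) + dphi x * a1 x * a1 x) (at x)"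
    by (rule has_vector_derivative_mult[OF dphi_has_derivative a1_has_derivative])
  then show ?thesis by (simp add: algebra_simps power2_eq_square)
qed

lemma continuous_dphi: "continuous_on S dphi"
  by (rule continuous_at_imp_continuous_on) (meson has_vector_derivative_continuous dphi_has_derivative)

lemma phi_has_derivative: "(phi m \<alpha> \<mu> h has_vector_derivative dphi x) (at x)"
proof -
  define a where "a = - (\<bar>x\<bar> + 1)"
  define b where "b = \<bar>x\<bar> + 1"
  have ax: "a < x" "x < b" "a < 0" "0 < b" by (auto simp: a_def b_def)
  have int: "dphi integrable_on {c..d}" for c d
    by (rule integrable_continuous_real[OF continuous_dphi])
  have eq: "phi m \<alpha> \<mu> h y = integral {a..y} dphi - integral {a..0} dphi" if "y \<in> {a<..<b}" for y
  proof (cases "0 \<le> y")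
    case True
    have "integral {a..0} dphi + integral {0..y} dphi = integral {a..y} dphi"
      by (rule Henstock_Kurzweil_Integration.integral_combine) (use True ax in \<open>auto intro: int\<close>)
    then show ?thesis using True by (simp add: phi_def algebra_simps)
  next
    case False
    have "integral {a..y} dphi + integral {y..0} dphi = integral {a..0} dphi"
      by (rule Henstock_Kurzweil_Integration.integral_combine) (use False that in \<open>auto intro: int\<close>)
    then show ?thesis using False by (simp add: phi_def algebra_simps)
  qed
  have "((\<lambda>u. integral {a..u} dphi) has_vector_derivative dphi x) (at x within {a..b})"
    by (rule integral_has_vector_derivative[OF continuous_dphi]) (use ax in auto)
  then have "((\<lambda>u. integral {a..u} dphi) has_vector_derivative dphi x) (at x)"
    using at_within_Icc_at[OF ax(1,2)] by simp
  then have "((\<lambda>u. integral {a..u} dphi - integral {a..0} dphi) has_vector_derivative dphi x) (at x)"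
    by (rule has_vector_derivative_eq_rhs[OF has_vector_derivative_diff[OF _ has_vector_derivative_const]]) simp
  then show ?thesis
    by (rule has_vector_derivative_transform_within_open[where S="{a<..<b}"]) (use ax eq in auto)
qed

lemma ff_eq: "ff m \<alpha> \<mu> h x = - complex_of_real (h^2) * (3/4 * (a1 x)^2 - 1/2 * a2 x)"
proof -
  have D1: "Dx (phi m \<alpha> \<mu> h) = dphi" by (rule Dx_eqI[OF phi_has_derivative])
  have D2: "Dx dphi = (\<lambda>x. dphi x * a1 x)" by (rule Dx_eqI[OF dphi_has_derivative])
  have D3: "Dx (\<lambda>x. dphi x * a1 x) = (\<lambda>x. dphi x * a2 x)" by (rule Dx_eqI[OF phi''_has_derivative])
  have "(dphi x)^2 \<noteq> 0" using dphi_nonzero[of x] by simp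
  then have E1: "inverse ((dphi x)^2) * (dphi x * a1 x)^2 = (a1 x)^2"
    by (simp only: power_mult_distrib mult.assoc[symmetric] left_inverse[OF \<open>(dphi x)^2 \<noteq> 0\<close>]
        mult_1_left)
  have E2: "inverse (dphi x) * (dphi x * a2 x) = a2 x"
    using dphi_nonzero[of x] by simp
  show ?thesis
    by (simp only: ff_def Let_def D1 D2 D3 mult.assoc E1 E2) simp
qed

definition osc :: "real \<Rightarrow> complex" where
  "osc x = exp (\<i> * phi m \<alpha> \<mu> h x / complex_of_real h)"

text \<open>The logarithmic derivative \<open>u'/u\<close>.\<close>
definition w :: "real \<Rightarrow> complex" where
  "w x = - a1 x / 2 + \<i> * dphi x / complex_of_real h"

lemma uu_eq: "uu m \<alpha> \<mu> h x = dphi x powr (-1/2) * osc x"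
  by (simp add: uu_def osc_def Dx_eqI[OF phi_has_derivative])

lemma osc_has_derivative: "(osc has_vector_derivative \<i> * dphi x / complex_of_real h * osc x) (at x)"
proof -
  have "((\<lambda>x. \<i> * phi m \<alpha> \<mu> h x / complex_of_real h) has_vector_derivative
      \<i> * dphi x / complex_of_real h) (at x)"
    by (intro has_vector_derivative_divide has_vector_derivative_mult_right phi_has_derivative)
  from field_vector_diff_chain_at[OF this DERIV_exp]
  show ?thesis unfolding osc_def[abs_def] by (simp add: o_def)
qed

lemma dphi_powr_has_derivative:
  "((\<lambda>x. dphi x powr (-1/2)) has_vector_derivative - a1 x / 2 * dphi x powr (-1/2)) (at x)"
proof -
  have D: "((\<lambda>x. dphi x powr (-1/2)) has_vector_derivative
      dphi x * a1 x * (- 1/2 * dphi x powr (- 1/2 - 1))) (at x)"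
    using field_vector_diff_chain_at[OF dphi_has_derivative
        has_field_derivative_powr[OF dphi_not_nonpos[of x], of "-1/2"]]
    by (simp add: o_def)
  have "dphi x powr (- 1/2 - 1) = dphi x powr (-1/2) / dphi x"
    using powr_diff[of "dphi x" "-1/2" 1] by simp
  moreover have "dphi x * a1 x * (- 1/2 * (P / dphi x)) = - a1 x / 2 * P" for P
    using dphi_nonzero[of x] by (simp add: field_simps)
  ultimately have "dphi x * a1 x * (- 1/2 * dphi x powr (- 1/2 - 1)) = - a1 x / 2 * dphi x powr (-1/2)"
    by (simp only:)
  with D show ?thesis by (simp only:)
qed

lemma uu_has_derivative: "(uu m \<alpha> \<mu> h has_vector_derivative w x * uu m \<alpha> \<mu> h x) (at x)"
proof -
  have "((\<lambda>x. dphi x powr (-1/2) * osc x) has_vector_derivative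
      dphi x powr (-1/2) * (\<i> * dphi x / complex_of_real h * osc x)
      + - a1 x / 2 * dphi x powr (-1/2) * osc x) (at x)"
    by (rule has_vector_derivative_mult[OF dphi_powr_has_derivative osc_has_derivative])
  moreover have "uu m \<alpha> \<mu> h = (\<lambda>x. dphi x powr (-1/2) * osc x)"
    by (rule ext) (rule uu_eq)
  ultimately show ?thesis by (simp add: w_def algebra_simps)
qed

lemma w_has_derivative:
  "(w has_vector_derivative - (a2 x - (a1 x)^2) / 2 + \<i> * (dphi x * a1 x) / complex_of_real h) (at x)"
  unfolding w_def[abs_def]
  by (intro has_vector_derivative_add has_vector_derivative_divide has_vector_derivative_minus
      has_vector_derivative_mult_right a1_has_derivative dphi_has_derivative)


section \<open>Bounds at scale gamma\<close>

lemma sqrt_mult_gamma_power: "0 \<le> c \<Longrightarrow> sqrt (c * \<gamma> ^ (2*m)) = sqrt c * \<gamma> ^ m"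
  using \<gamma>_pos by (simp add: real_sqrt_mult power_mult mult.commute[of 2 m])

lemma norm_dphi: "cmod (dphi x) = sqrt (cmod (q x))"
  by (simp add: dphi_eq)

lemma norm_q_ge: "\<mu> * \<gamma> ^ (2*m) \<le> cmod (q x)"
  using abs_ge_self[of "Im (q x)"] abs_Im_le_cmod[of "q x"] Im_q[of x] by linarith

lemma norm_q_le:
  assumes "\<bar>x\<bar> \<le> 2 * \<gamma>" shows "cmod (q x) \<le> Kq * \<gamma> ^ (2*m)"
proof -
  have "\<bar>x\<bar> ^ (2*m) \<le> (2 * \<gamma>) ^ (2*m)"
    using assms by (intro power_mono) auto
  also have "\<dots> = 4^m * \<gamma> ^ (2*m)"
    by (simp add: power_mult_distrib power_mult)
  finally have x: "\<bar>x\<bar> ^ (2*m) / real m \<le> 4^m / real m * \<gamma> ^ (2*m)"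
    using m_pos by (simp add: divide_right_mono)
  have "cmod (q x) \<le> cmod (Een m \<alpha> \<mu> h) + cmod (complex_of_real (x ^ (2*m) / real m))"
    unfolding q_def by (rule norm_triangle_ineq)
  also have "cmod (Een m \<alpha> \<mu> h) = cmod (Complex \<alpha> \<mu>) * \<gamma> ^ (2*m)"
    using h_pos by (simp add: Een_def norm_mult gam_power)
  also have "cmod (complex_of_real (x ^ (2*m) / real m)) = \<bar>x\<bar> ^ (2*m) / real m"
    by (simp only: norm_of_real abs_divide power_abs abs_of_nat)
  finally show ?thesis
    using x by (simp add: Kq_def algebra_simps)
qed

lemma norm_dphi_ge: "sqrt \<mu> * \<gamma> ^ m \<le> cmod (dphi x)"
  using norm_q_ge[of x] \<mu>_pos by (simp add: norm_dphi sqrt_mult_gamma_power[symmetric])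

lemma norm_dphi_le:
  assumes "\<bar>x\<bar> \<le> 2 * \<gamma>" shows "cmod (dphi x) \<le> sqrt Kq * \<gamma> ^ m"
  using norm_q_le[OF assms] Kq_pos by (simp add: norm_dphi sqrt_mult_gamma_power[symmetric])

lemma power_div_norm_q_le:
  assumes "\<bar>x\<bar> \<le> 2 * \<gamma>" and "n \<le> 2*m"
  shows "\<bar>x\<bar> ^ n / cmod (q x) \<le> Ka / \<gamma> ^ (2*m - n)"
proof -
  have "\<bar>x\<bar> ^ n \<le> (2 * \<gamma>) ^ n"
    using assms(1) by (intro power_mono) auto
  also have "\<dots> = 2 ^ n * \<gamma> ^ n"
    by (simp add: power_mult_distrib)
  also have "\<dots> \<le> 4 ^ m * \<gamma> ^ n"
  proof -
    have "(2::real) ^ n \<le> 2 ^ (2*m)" using assms(2) by (intro power_increasing) auto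
    also have "\<dots> = 4 ^ m" by (simp add: power_mult)
    finally show ?thesis using \<gamma>_pos by (intro mult_right_mono) auto
  qed
  finally have "\<bar>x\<bar> ^ n / cmod (q x) \<le> 4 ^ m * \<gamma> ^ n / (\<mu> * \<gamma> ^ (2*m))"
    using norm_q_ge[of x] \<mu>_pos \<gamma>_pos by (intro frac_le) auto
  also have "\<gamma> ^ (2*m) = \<gamma> ^ n * \<gamma> ^ (2*m - n)"
    using assms(2) by (simp flip: power_add)
  finally show ?thesis
    using \<mu>_pos \<gamma>_pos by (simp add: Ka_def)
qed

lemma norm_a1_le:
  assumes "\<bar>x\<bar> \<le> 2 * \<gamma>" shows "cmod (a1 x) \<le> Ka / \<gamma>"
proof -
  have "cmod (a1 x) = \<bar>x\<bar> ^ (2*m-1) / cmod (q x)"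
    by (simp add: a1_def norm_divide norm_power)
  also have "\<dots> \<le> Ka / \<gamma> ^ (2*m - (2*m-1))"
    using assms by (rule power_div_norm_q_le) simp
  finally show ?thesis using m_pos by simp
qed

lemma norm_a2_le:
  assumes "\<bar>x\<bar> \<le> 2 * \<gamma>" shows "cmod (a2 x) \<le> (2 * m * Ka + Ka^2) / \<gamma>^2"
proof -
  have "cmod (a2 x) \<le> real (2*m-1) * (\<bar>x\<bar> ^ (2*m-2) / cmod (q x)) + (cmod (a1 x))^2"
    using norm_triangle_ineq4[of "complex_of_real (real (2*m-1) * x ^ (2*m-2)) / q x" "(a1 x)^2"]
    by (simp add: a2_def norm_divide norm_mult norm_power power_abs)
  also have "\<dots> \<le> real (2*m) * (Ka / \<gamma>^2) + (Ka / \<gamma>)^2"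
  proof (intro add_mono mult_mono power_mono)
    show "\<bar>x\<bar> ^ (2*m-2) / cmod (q x) \<le> Ka / \<gamma>^2"
      using power_div_norm_q_le[OF assms, of "2*m-2"] m_pos by simp
  qed (use norm_a1_le[OF assms] Ka_pos \<gamma>_pos in auto)
  also have "\<dots> = (2 * m * Ka + Ka^2) / \<gamma>^2"
    by (simp add: power_divide add_divide_distrib)
  finally show ?thesis .
qed

lemma norm_w_le:
  assumes "\<bar>x\<bar> \<le> 2 * \<gamma>" shows "cmod (w x) \<le> (Ka/2 + sqrt Kq) / \<gamma>"
proof -
  have "cmod (w x) \<le> cmod (a1 x) / 2 + cmod (dphi x) / h"
    using norm_triangle_ineq[of "- a1 x / 2" "\<i> * dphi x / complex_of_real h"] h_pos
    by (simp add: w_def norm_divide norm_mult)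
  also have "\<dots> \<le> Ka / \<gamma> / 2 + sqrt Kq * \<gamma> ^ m / h"
    using norm_a1_le[OF assms] norm_dphi_le[OF assms] h_pos
    by (intro add_mono divide_right_mono) auto
  also have "sqrt Kq * \<gamma> ^ m / h = sqrt Kq * \<gamma> ^ m / (\<gamma> ^ m * \<gamma>)"
    using gam_power_Suc[OF h_pos, of m] by (simp only: power_Suc2)
  also have "\<dots> = sqrt Kq / \<gamma>"
    using \<gamma>_pos by simp
  finally show ?thesis by (simp add: add_divide_distrib)
qed

lemma norm_phi_le:
  assumes x: "\<bar>x\<bar> \<le> 2 * \<gamma>" shows "cmod (phi m \<alpha> \<mu> h x) \<le> 2 * sqrt Kq * h"
proof -
  define M where "M = sqrt Kq * \<gamma> ^ m"
  have M: "0 \<le> M" using Kq_pos \<gamma>_pos by (simp add: M_def)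
  have int: "(dphi has_integral integral {c..d} dphi) {c..d}" for c d
    by (rule integrable_integral[OF integrable_continuous_real[OF continuous_dphi]])
  have bound: "cmod (dphi y) \<le> M" if "\<bar>y\<bar> \<le> \<bar>x\<bar>" for y
    using norm_dphi_le[of y] that x by (simp add: M_def)
  have "cmod (phi m \<alpha> \<mu> h x) \<le> \<bar>x\<bar> * M"
  proof (cases "0 \<le> x")
    case True
    have "cmod (integral {0..x} dphi) \<le> M * Henstock_Kurzweil_Integration.content (cbox 0 x)"
      by (rule has_integral_bound[OF M]) (use int[of 0 x] bound True in auto)
    then show ?thesis using True by (simp add: phi_def content_real mult.commute)
  next
    case False
    have "cmod (integral {x..0} dphi) \<le> M * Henstock_Kurzweil_Integration.content (cbox x 0)"
      by (rule has_integral_bound[OF M]) (use int[of x 0] bound False in auto)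
    then show ?thesis using False by (simp add: phi_def content_real mult.commute)
  qed
  also have "\<dots> \<le> 2 * \<gamma> * M"
    using x M by (rule mult_right_mono)
  also have "\<dots> = 2 * sqrt Kq * h"
    using gam_power_Suc[OF h_pos, of m] by (simp add: M_def)
  finally show ?thesis .
qed

lemma norm_osc_squared: "(cmod (osc x))^2 = exp (- 2 * (Im (phi m \<alpha> \<mu> h x) / h))"
  by (simp add: osc_def Re_divide_of_real power2_eq_square exp_add[symmetric])

lemma norm_osc_squared_bounds:
  assumes "\<bar>x\<bar> \<le> 2 * \<gamma>"
  shows "exp (- 4 * sqrt Kq) \<le> (cmod (osc x))^2" and "(cmod (osc x))^2 \<le> exp (4 * sqrt Kq)"
proof -
  have "\<bar>Im (phi m \<alpha> \<mu> h x)\<bar> \<le> 2 * sqrt Kq * h"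
    using abs_Im_le_cmod norm_phi_le[OF assms] by (rule order_trans)
  then have "\<bar>Im (phi m \<alpha> \<mu> h x) / h\<bar> \<le> 2 * sqrt Kq"
    using h_pos by (simp add: pos_divide_le_eq)
  then have "- 4 * sqrt Kq \<le> - 2 * (Im (phi m \<alpha> \<mu> h x) / h)"
    and "- 2 * (Im (phi m \<alpha> \<mu> h x) / h) \<le> 4 * sqrt Kq"
    by (simp_all only: abs_le_iff) linarith+
  then show "exp (- 4 * sqrt Kq) \<le> (cmod (osc x))^2" and "(cmod (osc x))^2 \<le> exp (4 * sqrt Kq)"
    unfolding norm_osc_squared by simp_all
qed

lemma norm_uu_squared: "(cmod (uu m \<alpha> \<mu> h x))^2 = (cmod (osc x))^2 / cmod (dphi x)"
proof -
  have r: "0 < cmod (dphi x)" using dphi_nonzero by simp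
  have "cmod (dphi x powr (-1/2)) = cmod (dphi x) powr (-1/2)"
    by (subst norm_powr_real_powr') auto
  then have "(cmod (uu m \<alpha> \<mu> h x))^2 = (cmod (dphi x) powr (-1/2))^2 * (cmod (osc x))^2"
    by (simp add: uu_eq norm_mult power_mult_distrib)
  also have "(cmod (dphi x) powr (-1/2))^2 = cmod (dphi x) powr (-1)"
    using r by (simp add: powr_power)
  also have "\<dots> = 1 / cmod (dphi x)"
    using r by (simp add: powr_minus_divide)
  finally show ?thesis by simp
qed

lemma norm_uu_squared_le:
  assumes "\<bar>x\<bar> \<le> 2 * \<gamma>" shows "(cmod (uu m \<alpha> \<mu> h x))^2 \<le> Ku1 / \<gamma> ^ m"
proof -
  have "(cmod (osc x))^2 / cmod (dphi x) \<le> exp (4 * sqrt Kq) / (sqrt \<mu> * \<gamma> ^ m)"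
    using norm_osc_squared_bounds(2)[OF assms] norm_dphi_ge[of x] \<mu>_pos \<gamma>_pos
    by (intro frac_le) auto
  then show ?thesis by (simp add: norm_uu_squared Ku1_def)
qed

lemma norm_uu_squared_ge:
  assumes "\<bar>x\<bar> \<le> 2 * \<gamma>" shows "Ku0 / \<gamma> ^ m \<le> (cmod (uu m \<alpha> \<mu> h x))^2"
proof -
  have "exp (- 4 * sqrt Kq) / (sqrt Kq * \<gamma> ^ m) \<le> (cmod (osc x))^2 / cmod (dphi x)"
    using norm_osc_squared_bounds(1)[OF assms] norm_dphi_le[OF assms] dphi_nonzero[of x]
    by (intro frac_le) auto
  then show ?thesis by (simp add: norm_uu_squared Ku0_def)
qed

end

section \<open>The remainder\<close>

locale wkb_cutoff = wkb + cutoff_derivs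
begin

lemma rescaled_cutoff_has_derivative:
  "((\<lambda>y. complex_of_real (ds k (y / \<gamma>) / \<gamma> ^ k)) has_vector_derivative
     complex_of_real (ds (Suc k) (x / \<gamma>) / \<gamma> ^ Suc k)) (at x)"
  using ds_deriv \<gamma>_pos by (intro has_vector_derivative_of_real_rescaled) auto

lemma rescaled_cutoff_vanish: "2 * \<gamma> < \<bar>x\<bar> \<Longrightarrow> ds k (x / \<gamma>) = 0"
  using \<gamma>_pos by (intro ds_vanish) (simp add: abs_divide pos_less_divide_eq)

text \<open>The first summand of \<open>Q\<close> comes from \<open>f\<close>, the other two from the commutator.\<close>
definition Q :: "real \<Rightarrow> complex" where
  "Q x = complex_of_real (ds 0 (x / \<gamma>)) * (3/4 * (a1 x)^2 - 1/2 * a2 x)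
     + complex_of_real (ds 2 (x / \<gamma>) / \<gamma>^2) + 2 * complex_of_real (ds 1 (x / \<gamma>) / \<gamma>) * w x"

lemma comm_eq:
  "comm chi m \<alpha> \<mu> h x = - complex_of_real (h^2) *
     (complex_of_real (ds 2 (x / \<gamma>) / \<gamma>^2) * uu m \<alpha> \<mu> h x
      + 2 * complex_of_real (ds 1 (x / \<gamma>) / \<gamma>) * (w x * uu m \<alpha> \<mu> h x))"
proof -
  have c0: "((\<lambda>y. complex_of_real (chi (y / \<gamma>))) has_vector_derivative
      complex_of_real (ds 1 (y / \<gamma>) / \<gamma>)) (at y)" for y
    using rescaled_cutoff_has_derivative[of 0 y] by (simp add: ds_0)
  have c1: "((\<lambda>y. complex_of_real (ds 1 (y / \<gamma>) / \<gamma>)) has_vector_derivative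
      complex_of_real (ds 2 (x / \<gamma>) / \<gamma>^2)) (at x)"
    using rescaled_cutoff_has_derivative[of 1 x] by (simp add: numeral_2_eq_2)
  have u1: "((\<lambda>y. w y * uu m \<alpha> \<mu> h y) has_vector_derivative
      w x * (w x * uu m \<alpha> \<mu> h x) + (- (a2 x - (a1 x)^2) / 2 + \<i> * (dphi x * a1 x) / complex_of_real h)
        * uu m \<alpha> \<mu> h x) (at x)"
    by (rule has_vector_derivative_mult[OF w_has_derivative uu_has_derivative])
  have "comm chi m \<alpha> \<mu> h x = hD h (hD h (\<lambda>y. complex_of_real (chi (y / \<gamma>)) * uu m \<alpha> \<mu> h y)) x
      - complex_of_real (chi (x / \<gamma>)) * hD h (hD h (uu m \<alpha> \<mu> h)) x"
    by (simp add: comm_def ut_def[abs_def])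
  also have "\<dots> = - complex_of_real (h^2) *
     (complex_of_real (ds 2 (x / \<gamma>) / \<gamma>^2) * uu m \<alpha> \<mu> h x
      + 2 * complex_of_real (ds 1 (x / \<gamma>) / \<gamma>) * (w x * uu m \<alpha> \<mu> h x))"
    by (rule hD_hD_mult_commutator[OF c0 c1 uu_has_derivative u1])
  finally show ?thesis .
qed

lemma RR_eq: "RR chi m \<alpha> \<mu> h x = - complex_of_real (h^2) * uu m \<alpha> \<mu> h x * Q x"
  unfolding RR_def ff_eq comm_eq ut_def Q_def ds_0 by algebra

lemma Q_eq_0: "2 * \<gamma> < \<bar>x\<bar> \<Longrightarrow> Q x = 0"
  by (simp add: Q_def rescaled_cutoff_vanish)

lemma norm_Q_le:
  assumes x: "\<bar>x\<bar> \<le> 2 * \<gamma>" shows "cmod (Q x) \<le> KQ B / \<gamma>^2"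
proof -
  define S where "S = 3/4 * Ka^2 + 1/2 * (2 * m * Ka + Ka^2)"
  have f: "cmod (3/4 * (a1 x)^2 - 1/2 * a2 x) \<le> S / \<gamma>^2"
  proof -
    have "cmod (3/4 * (a1 x)^2 - 1/2 * a2 x) \<le> 3/4 * (cmod (a1 x))^2 + 1/2 * cmod (a2 x)"
      using norm_triangle_ineq4[of "3/4 * (a1 x)^2" "1/2 * a2 x"] by (simp add: norm_mult norm_power)
    also have "\<dots> \<le> 3/4 * (Ka / \<gamma>)^2 + 1/2 * ((2 * m * Ka + Ka^2) / \<gamma>^2)"
      using norm_a1_le[OF x] norm_a2_le[OF x] by (intro add_mono mult_left_mono power_mono) auto
    also have "\<dots> = S / \<gamma>^2"
      using \<gamma>_pos by (simp add: S_def power_divide field_simps)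
    finally show ?thesis .
  qed
  have "cmod (Q x) \<le> cmod (complex_of_real (ds 0 (x / \<gamma>)) * (3/4 * (a1 x)^2 - 1/2 * a2 x))
      + cmod (complex_of_real (ds 2 (x / \<gamma>) / \<gamma>^2))
      + cmod (2 * complex_of_real (ds 1 (x / \<gamma>) / \<gamma>) * w x)"
    unfolding Q_def by (rule order_trans[OF norm_triangle_ineq add_mono[OF norm_triangle_ineq order_refl]])
  also have "\<dots> = \<bar>ds 0 (x / \<gamma>)\<bar> * cmod (3/4 * (a1 x)^2 - 1/2 * a2 x)
      + \<bar>ds 2 (x / \<gamma>)\<bar> / \<gamma>^2 + 2 * (\<bar>ds 1 (x / \<gamma>)\<bar> / \<gamma>) * cmod (w x)"
    using \<gamma>_pos by (simp add: norm_mult norm_divide norm_power)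
  also have "\<dots> \<le> B * (S / \<gamma>^2) + B / \<gamma>^2 + 2 * (B / \<gamma>) * ((Ka/2 + sqrt Kq) / \<gamma>)"
    using ds_bound[of 0 "x / \<gamma>"] ds_bound[of 1 "x / \<gamma>"] ds_bound[of 2 "x / \<gamma>"]
      f norm_w_le[OF x] \<gamma>_pos B_pos
    by (intro add_mono mult_mono divide_right_mono) auto
  also have "\<dots> = KQ B / \<gamma>^2"
    using \<gamma>_pos by (simp add: KQ_def S_def field_simps power2_eq_square)
  finally show ?thesis .
qed

lemma norm_RR_le:
  assumes "\<bar>x\<bar> \<le> 2 * \<gamma>"
  shows "cmod (RR chi m \<alpha> \<mu> h x) \<le> KQ B * \<gamma> ^ (2*m) * cmod (uu m \<alpha> \<mu> h x)"
proof -
  have "h^2 = \<gamma> ^ (2*m) * \<gamma>^2"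
    using gam_power_Suc[OF h_pos, of m] by (metis power_Suc2 power_mult_distrib power_mult mult.commute)
  then have h: "h^2 / \<gamma>^2 = \<gamma> ^ (2*m)"
    using \<gamma>_pos by simp
  have "cmod (RR chi m \<alpha> \<mu> h x) = h^2 * cmod (uu m \<alpha> \<mu> h x) * cmod (Q x)"
    using h_pos by (simp add: RR_eq norm_mult norm_power)
  also have "\<dots> \<le> h^2 * cmod (uu m \<alpha> \<mu> h x) * (KQ B / \<gamma>^2)"
    by (intro mult_left_mono norm_Q_le[OF assms]) auto
  also have "\<dots> = KQ B * (h^2 / \<gamma>^2) * cmod (uu m \<alpha> \<mu> h x)"
    by simp
  finally show ?thesis by (simp only: h)
qed

lemma norm_RR_squared_le:
  "(cmod (RR chi m \<alpha> \<mu> h x))^2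
     \<le> indicator {-2*\<gamma>..2*\<gamma>} x * ((KQ B * \<gamma> ^ (2*m))^2 * (Ku1 / \<gamma> ^ m))"
proof (cases "\<bar>x\<bar> \<le> 2 * \<gamma>")
  case True
  have "(cmod (RR chi m \<alpha> \<mu> h x))^2 \<le> (KQ B * \<gamma> ^ (2*m) * cmod (uu m \<alpha> \<mu> h x))^2"
    using norm_RR_le[OF True] by (intro power_mono) auto
  also have "\<dots> \<le> (KQ B * \<gamma> ^ (2*m))^2 * (Ku1 / \<gamma> ^ m)"
    unfolding power_mult_distrib[of _ "cmod _"]
    by (intro mult_left_mono norm_uu_squared_le[OF True]) auto
  finally show ?thesis using True by (simp add: abs_le_iff)
next
  case False
  then have "x \<notin> {-2*\<gamma>..2*\<gamma>}" by auto
  with False show ?thesis by (simp add: RR_eq Q_eq_0)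
qed

lemma continuous_ut: "continuous_on UNIV (ut chi m \<alpha> \<mu> h)"
proof -
  have "isCont (\<lambda>x. complex_of_real (chi (x / \<gamma>))) x" for x
    using rescaled_cutoff_has_derivative[of 0 x] has_vector_derivative_continuous
    by (fastforce simp: ds_0)
  moreover have "isCont (uu m \<alpha> \<mu> h) x" for x
    using uu_has_derivative has_vector_derivative_continuous by blast
  ultimately show ?thesis
    unfolding ut_def[abs_def] by (intro continuous_at_imp_continuous_on ballI isCont_mult)
qed

lemma norm_ut_squared_le:
  "(cmod (ut chi m \<alpha> \<mu> h x))^2 \<le> indicator {-2*\<gamma>..2*\<gamma>} x * (B^2 * (Ku1 / \<gamma> ^ m))"
proof (cases "\<bar>x\<bar> \<le> 2 * \<gamma>")
  case True
  have "(cmod (ut chi m \<alpha> \<mu> h x))^2 = (ds 0 (x / \<gamma>))^2 * (cmod (uu m \<alpha> \<mu> h x))^2"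
    by (simp add: ut_def ds_0 norm_mult power_mult_distrib)
  also have "\<dots> \<le> B^2 * (Ku1 / \<gamma> ^ m)"
    using ds_bound[of 0 "x / \<gamma>"] norm_uu_squared_le[OF True]
    by (intro mult_mono) (auto simp: abs_le_square_iff[symmetric] abs_of_pos[OF B_pos])
  finally show ?thesis using True by (simp add: abs_le_iff)
next
  case False
  then have "x \<notin> {-2*\<gamma>..2*\<gamma>}" by auto
  with False show ?thesis by (simp add: ut_def ds_0[symmetric] rescaled_cutoff_vanish)
qed

lemma norm_ut_squared_ge:
  assumes "x \<in> {-\<gamma>..\<gamma>}" shows "Ku0 / \<gamma> ^ m \<le> (cmod (ut chi m \<alpha> \<mu> h x))^2"
proof -
  have "\<bar>x\<bar> \<le> \<gamma>" using assms by auto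
  then have "chi (x / \<gamma>) = 1"
    using \<gamma>_pos by (intro chi_one) (simp add: abs_divide)
  moreover have "\<bar>x\<bar> \<le> 2 * \<gamma>" using \<open>\<bar>x\<bar> \<le> \<gamma>\<close> \<gamma>_pos by simp
  ultimately show ?thesis using norm_uu_squared_ge by (simp add: ut_def)
qed

lemma L2norm_RR_le:
  "L2norm (RR chi m \<alpha> \<mu> h) \<le> KQ B * sqrt (2 * Ku1 / Ku0) * h powr (2 * real m / (real m + 1))
     * L2norm (ut chi m \<alpha> \<mu> h)"
proof -
  define A where "A = KQ B * \<gamma> ^ (2*m)"
  have A: "0 \<le> A" using KQ_pos[OF B_pos] \<gamma>_pos by (simp add: A_def)
  have "L2norm (RR chi m \<alpha> \<mu> h) \<le> sqrt ((2*\<gamma> - -2*\<gamma>) * (A^2 * (Ku1 / \<gamma> ^ m)))"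
    using \<gamma>_pos Ku1_pos unfolding A_def by (intro L2norm_le_of_pointwise_bound norm_RR_squared_le) auto
  also have "\<dots> = A * sqrt (2 * Ku1 / Ku0) * sqrt ((\<gamma> - -\<gamma>) * (Ku0 / \<gamma> ^ m))"
  proof -
    have e: "(2*\<gamma> - -2*\<gamma>) * (A^2 * (Ku1 / \<gamma> ^ m))
        = A^2 * ((2 * Ku1 / Ku0) * ((\<gamma> - -\<gamma>) * (Ku0 / \<gamma> ^ m)))"
      using Ku0_pos by (simp add: field_simps)
    show ?thesis
      unfolding e real_sqrt_mult real_sqrt_abs abs_of_nonneg[OF A] by (simp only: mult.assoc)
  qed
  also have "\<dots> \<le> A * sqrt (2 * Ku1 / Ku0) * L2norm (ut chi m \<alpha> \<mu> h)"
  proof (intro mult_left_mono L2norm_ge_of_pointwise_bound norm_ut_squared_ge)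
    show "integrable lborel (\<lambda>x. (cmod (ut chi m \<alpha> \<mu> h x))^2)"
      using \<gamma>_pos by (intro square_integrable_of_pointwise_bound[OF continuous_ut norm_ut_squared_le]) auto
  qed (use A \<gamma>_pos Ku0_pos Ku1_pos in auto)
  finally show ?thesis
    using h_pos by (simp add: A_def gam_power mult_ac)
qed

end

theorem lemma5p2:
  fixes m :: nat and \<alpha> \<mu> :: real and chi :: "real \<Rightarrow> real"
  assumes "m \<ge> 2" and "\<alpha> > 0" and "\<mu> > 0" and "cutoff chi"
  shows "\<exists>C>0. \<forall>h. 0 < h \<and> h \<le> 1 \<longrightarrow>
           L2norm (RR chi m \<alpha> \<mu> h) \<le> C * h powr (2 * real m / (real m + 1)) * L2norm (ut chi m \<alpha> \<mu> h)"
proof -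
  interpret wkb_params m \<alpha> \<mu>
    using assms by unfold_locales auto
  obtain ds B where cutoff: "cutoff_derivs chi ds B"
    using cutoff_imp_cutoff_derivs[OF assms(4)] by blast
  have "0 < B" using cutoff by (rule cutoff_derivs.B_pos)
  show ?thesis
  proof (intro exI conjI allI impI)
    show "0 < KQ B * sqrt (2 * Ku1 / Ku0)"
      using KQ_pos[OF \<open>0 < B\<close>] Ku0_pos Ku1_pos by simp
    fix h :: real
    assume "0 < h \<and> h \<le> 1"
    then interpret wkb_cutoff m \<alpha> \<mu> h chi ds B
      using cutoff by (intro_locales) (auto simp: wkb_axioms_def)
    show "L2norm (RR chi m \<alpha> \<mu> h) \<le> KQ B * sqrt (2 * Ku1 / Ku0) * h powr (2 * real m / (real m + 1))
        * L2norm (ut chi m \<alpha> \<mu> h)"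
      by (rule L2norm_RR_le)
  qed
qed

end
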